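(* Let $X$ be a finite set and let $\tau\subseteq\binom{X}{2}$ with $L(\tau)=X$. The following are equivalent: (i) $\tau$ is thin, i.e. $|L(\tau')|\ge|\tau'|+1$ for every non-empty $\tau'\subseteq\tau$; (ii) there exists a rooted binary phylogenetic $X$-tree $T$ for which the map $s\mapsto{\rm lca}_T(s)$ from $\tau$ to the set of interior vertices of $T$ is one-to-one; (iii) as in (ii), but with $T$ a rooted caterpillar tree.
   Context: $L(\tau)=\bigcup_{s\in\tau}s$. A rooted binary phylogenetic $X$-tree is a rooted tree whose leaves (out-degree 0) are bijectively labelled by $X$ and whose non-leaf vertices are unlabelled with out-degree exactly 2. Interior vertices are non-leaf vertices. A cherry is a pair of leaves adjacent to a common vertex; a rooted caterpillar tree is a rooted binary phylogenetic tree with at most one cherry. For $s\subseteq X$, ${\rm lca}_T(s)$ is the least common ancestor in $T$ of the leaves in $s$. *)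

theory Defs
  imports Main
begin

text \<open>Vertices of the tree are identified with the subtrees rooted at them (this is
unambiguous because leaf labels are distinct).\<close>

datatype 'a rbtree = Leaf 'a | Node "'a rbtree" "'a rbtree"

fun leaf_list :: "'a rbtree \<Rightarrow> 'a list" where
  "leaf_list (Leaf a) = [a]"
| "leaf_list (Node l r) = leaf_list l @ leaf_list r"

definition leaves :: "'a rbtree \<Rightarrow> 'a set" where
  "leaves t = set (leaf_list t)"

definition phylo_tree :: "'a set \<Rightarrow> 'a rbtree \<Rightarrow> bool" where
  "phylo_tree X T \<longleftrightarrow> distinct (leaf_list T) \<and> leaves T = X"

text \<open>All vertices of T (as subtrees rooted at them); v is a descendant of w
iff v \<in> vertices w.\<close>
fun vertices :: "'a rbtree \<Rightarrow> 'a rbtree set" where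
  "vertices (Leaf a) = {Leaf a}"
| "vertices (Node l r) = insert (Node l r) (vertices l \<union> vertices r)"

definition interior_vertices :: "'a rbtree \<Rightarrow> 'a rbtree set" where
  "interior_vertices T = {v \<in> vertices T. \<exists>l r. v = Node l r}"

definition lca :: "'a rbtree \<Rightarrow> 'a set \<Rightarrow> 'a rbtree" where
  "lca T s = (THE v. v \<in> vertices T \<and> s \<subseteq> leaves v \<and>
       (\<forall>w\<in>vertices T. s \<subseteq> leaves w \<longrightarrow> v \<in> vertices w))"

definition cherries :: "'a rbtree \<Rightarrow> 'a rbtree set" where
  "cherries T = {v \<in> vertices T. \<exists>a b. v = Node (Leaf a) (Leaf b)}"

definition caterpillar :: "'a rbtree \<Rightarrow> bool" where
  "caterpillar T \<longleftrightarrow> card (cherries T) \<le> 1"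

definition thin :: "'a set set \<Rightarrow> bool" where
  "thin \<tau> \<longleftrightarrow> (\<forall>\<tau>'. \<tau>' \<subseteq> \<tau> \<and> \<tau>' \<noteq> {} \<longrightarrow> card (\<Union>\<tau>') \<ge> card \<tau>' + 1)"

end

theory Submission
  imports Defs
begin

text \<open>For (ii) \<Longrightarrow> (i): the lcas of the pairs inside a set S of leaves are interior
vertices of the subtree spanned by S, and there are fewer than |S| of them; so if lca is
injective on \<tau>' \<subseteq> \<tau>, then |\<tau>'| < |\<Union>\<tau>'|. For (i) \<Longrightarrow> (iii): double counting shows that a thin
family of pairs has a point x lying in at most one of its pairs. By induction there is a
caterpillar for X - {x} separating the pairs avoiding x; hanging it together with the leaf x
below a new root keeps their lcas and sends the pair containing x, if any, to the new root.\<close>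

lemma leaves_simps [simp]:
  "leaves (Leaf a) = {a}" "leaves (Node l r) = leaves l \<union> leaves r"
  by (auto simp: leaves_def)

lemma finite_leaves [simp]: "finite (leaves t)"
  by (simp add: leaves_def)

lemma size_vertices: "v \<in> vertices t \<Longrightarrow> v = t \<or> size v < size t"
  by (induction t) auto

lemma vertices_antisym: "v \<in> vertices w \<Longrightarrow> w \<in> vertices v \<Longrightarrow> v = w"
  using size_vertices[of v w] size_vertices[of w v] by auto

lemma leaves_mono_vertices: "v \<in> vertices t \<Longrightarrow> leaves v \<subseteq> leaves t"
  by (induction t) auto

lemma distinct_leaf_list_Node:
  "distinct (leaf_list (Node l r)) \<longleftrightarrow>
     distinct (leaf_list l) \<and> distinct (leaf_list r) \<and> leaves l \<inter> leaves r = {}"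
  by (simp add: leaves_def)

fun find_lca :: "'a rbtree \<Rightarrow> 'a set \<Rightarrow> 'a rbtree" where
  "find_lca (Leaf a) s = Leaf a"
| "find_lca (Node l r) s =
     (if s \<subseteq> leaves l then find_lca l s else if s \<subseteq> leaves r then find_lca r s else Node l r)"

lemma find_lca_in_vertices: "find_lca t s \<in> vertices t"
  by (induction t) auto

lemma subset_leaves_find_lca: "s \<subseteq> leaves t \<Longrightarrow> s \<subseteq> leaves (find_lca t s)"
  by (induction t) auto

lemma find_lca_below:
  assumes "distinct (leaf_list t)" "s \<noteq> {}" "w \<in> vertices t" "s \<subseteq> leaves w"
  shows "find_lca t s \<in> vertices w"
  using assms
proof (induction t arbitrary: w)
  case (Node l r)
  then have dist: "distinct (leaf_list l)" "distinct (leaf_list r)"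
    and disjoint: "leaves l \<inter> leaves r = {}"
    unfolding distinct_leaf_list_Node by blast+
  consider "w = Node l r" | "w \<in> vertices l" | "w \<in> vertices r"
    using Node.prems(3) by auto
  then show ?case
  proof cases
    case 1
    then show ?thesis using find_lca_in_vertices by blast
  next
    case 2
    then have "s \<subseteq> leaves l" using Node.prems(4) leaves_mono_vertices by blast
    then show ?thesis using 2 Node.prems(4) Node.IH(1)[OF dist(1) Node.prems(2)] by simp
  next
    case 3
    then have "s \<subseteq> leaves r" using Node.prems(4) leaves_mono_vertices by blast
    moreover have "\<not> s \<subseteq> leaves l" using calculation disjoint Node.prems(2) by blast
    ultimately show ?thesis using 3 Node.prems(4) Node.IH(2)[OF dist(2) Node.prems(2)] by simp
  qed
qed simp

lemma lca_eq_find_lca: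
  assumes "distinct (leaf_list t)" "s \<noteq> {}" "s \<subseteq> leaves t"
  shows "lca t s = find_lca t s"
  unfolding lca_def
proof (rule the_equality)
  show "find_lca t s \<in> vertices t \<and> s \<subseteq> leaves (find_lca t s) \<and>
      (\<forall>w\<in>vertices t. s \<subseteq> leaves w \<longrightarrow> find_lca t s \<in> vertices w)"
    using assms by (simp add: find_lca_in_vertices subset_leaves_find_lca find_lca_below)
  fix v
  assume "v \<in> vertices t \<and> s \<subseteq> leaves v \<and> (\<forall>w\<in>vertices t. s \<subseteq> leaves w \<longrightarrow> v \<in> vertices w)"
  then show "v = find_lca t s"
    using assms by (metis find_lca_in_vertices subset_leaves_find_lca find_lca_below vertices_antisym)
qed

lemma find_lca_in_interior_vertices:
  assumes "2 \<le> card s" "s \<subseteq> leaves t"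
  shows "find_lca t s \<in> interior_vertices t"
proof (cases "find_lca t s")
  case (Leaf a)
  then have "s \<subseteq> {a}" using subset_leaves_find_lca[OF assms(2)] by simp
  then have "card s \<le> 1" using card_mono[of "{a}" s] by simp
  with assms(1) show ?thesis by simp
next
  case (Node l r)
  then show ?thesis using find_lca_in_vertices[of t s] by (simp add: interior_vertices_def)
qed

definition doubletons :: "'a set \<Rightarrow> 'a set set" where
  "doubletons S = {s. s \<subseteq> S \<and> card s = 2}"

lemma finite_doubletons: "finite S \<Longrightarrow> finite (doubletons S)"
  unfolding doubletons_def by (rule finite_subset[of _ "Pow S"]) auto

lemma lca_doubleton_eq_find_lca:
  assumes "phylo_tree X t" "s \<in> doubletons X"
  shows "lca t s = find_lca t s"
  using assms by (intro lca_eq_find_lca) (auto simp: phylo_tree_def doubletons_def)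

lemma lca_doubleton_in_interior_vertices:
  assumes "phylo_tree X t" "s \<in> doubletons X"
  shows "lca t s \<in> interior_vertices t"
  using assms lca_doubleton_eq_find_lca[OF assms]
  by (auto simp: phylo_tree_def doubletons_def intro: find_lca_in_interior_vertices)

lemma doubletons_singleton [simp]: "doubletons {a} = {}"
proof -
  have "s \<notin> doubletons {a}" for s
  proof
    assume "s \<in> doubletons {a}"
    then have "s \<subseteq> {a}" "card s = 2"
      by (simp_all add: doubletons_def)
    then show False using card_mono[of "{a}" s] by simp
  qed
  then show ?thesis by blast
qed

lemma card_find_lca_doubletons_less:
  assumes "distinct (leaf_list t)" "S \<subseteq> leaves t" "S \<noteq> {}"
  shows "card (find_lca t ` doubletons S) < card S"
  using assms
proof (induction t arbitrary: S)
  case (Leaf a)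
  then have "S = {a}"
    by (simp add: subset_singleton_iff)
  then show ?case by simp
next
  case (Node l r)
  define A where "A = S \<inter> leaves l"
  define B where "B = S \<inter> leaves r"
  have dist: "distinct (leaf_list l)" "distinct (leaf_list r)" and disjoint: "leaves l \<inter> leaves r = {}"
    using Node.prems(1) unfolding distinct_leaf_list_Node by blast+
  have S_split: "S = A \<union> B" "A \<inter> B = {}" "finite A" "finite B"
    using Node.prems(2) disjoint finite_leaves[of l] finite_leaves[of r]
    by (auto simp: A_def B_def intro: finite_subset)
  have doubleton_ne: "s \<noteq> {}" if "s \<in> doubletons S" for s
    using that by (auto simp: doubletons_def)
  have left: "find_lca (Node l r) s = find_lca l s \<and> s \<in> doubletons A"
    if "s \<in> doubletons S" "s \<subseteq> leaves l" for s
    using that by (auto simp: doubletons_def A_def)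
  have right: "find_lca (Node l r) s = find_lca r s \<and> s \<in> doubletons B"
    if "s \<in> doubletons S" "s \<subseteq> leaves r" for s
    using that doubleton_ne[OF that(1)] disjoint by (auto simp: doubletons_def B_def)
  show ?case
  proof (cases "A = {} \<or> B = {}")
    case True
    then have "S \<subseteq> leaves l \<or> S \<subseteq> leaves r"
      using Node.prems(2) unfolding A_def B_def by auto
    then show ?thesis
    proof
      assume "S \<subseteq> leaves l"
      then have "find_lca (Node l r) ` doubletons S = find_lca l ` doubletons S"
        by (intro image_cong) (auto simp: doubletons_def)
      then show ?thesis using Node.IH(1)[OF dist(1) \<open>S \<subseteq> leaves l\<close> Node.prems(3)] by simp
    next
      assume "S \<subseteq> leaves r"
      then have "find_lca (Node l r) s = find_lca r s" if "s \<in> doubletons S" for s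
        using that right[of s] by (auto simp: doubletons_def simp del: find_lca.simps)
      then have "find_lca (Node l r) ` doubletons S = find_lca r ` doubletons S"
        by simp
      then show ?thesis using Node.IH(2)[OF dist(2) \<open>S \<subseteq> leaves r\<close> Node.prems(3)] by simp
    qed
  next
    case False
    have "find_lca (Node l r) s \<in>
        insert (Node l r) (find_lca l ` doubletons A \<union> find_lca r ` doubletons B)"
      if "s \<in> doubletons S" for s
    proof -
      consider "s \<subseteq> leaves l" | "s \<subseteq> leaves r" | "\<not> s \<subseteq> leaves l" "\<not> s \<subseteq> leaves r"
        by blast
      then show ?thesis
      proof cases
        case 1
        with left[OF that] show ?thesis by (auto simp del: find_lca.simps)
      next
        case 2
        with right[OF that] show ?thesis by (auto simp del: find_lca.simps)
      qed simp
    qed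
    then have "find_lca (Node l r) ` doubletons S \<subseteq>
        insert (Node l r) (find_lca l ` doubletons A \<union> find_lca r ` doubletons B)"
      by blast
    then have "card (find_lca (Node l r) ` doubletons S) \<le>
        card (insert (Node l r) (find_lca l ` doubletons A \<union> find_lca r ` doubletons B))"
      using S_split by (intro card_mono) (simp_all add: finite_doubletons)
    also have "\<dots> \<le> Suc (card (find_lca l ` doubletons A \<union> find_lca r ` doubletons B))"
      using S_split by (simp add: card_insert_if finite_doubletons)
    also have "\<dots> \<le> Suc (card (find_lca l ` doubletons A) + card (find_lca r ` doubletons B))"
      using card_Un_le by simp
    also have "\<dots> < card A + card B"
      using Node.IH(1)[OF dist(1), of A] Node.IH(2)[OF dist(2), of B] False
      by (simp add: A_def B_def)
    also have "\<dots> = card S"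
      using S_split by (simp add: card_Un_disjoint)
    finally show ?thesis .
  qed
qed

lemma thin_if_inj_on_lca:
  assumes "phylo_tree X t" "\<tau> \<subseteq> doubletons X" "inj_on (lca t) \<tau>"
  shows "thin \<tau>"
  unfolding thin_def
proof (intro allI impI, elim conjE)
  fix \<tau>' assume sub: "\<tau>' \<subseteq> \<tau>" and ne: "\<tau>' \<noteq> {}"
  have dist: "distinct (leaf_list t)" and S_leaves: "\<Union>\<tau>' \<subseteq> leaves t"
    using assms(1,2) sub by (auto simp: phylo_tree_def doubletons_def)
  have doubleton: "s \<in> doubletons (\<Union>\<tau>')" if "s \<in> \<tau>'" for s
    using that sub assms(2) by (auto simp: doubletons_def)
  then have S_ne: "\<Union>\<tau>' \<noteq> {}"
    using ne by (fastforce simp: doubletons_def)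
  have "lca t ` \<tau>' = find_lca t ` \<tau>'"
    using sub assms(1,2) lca_doubleton_eq_find_lca by (metis image_cong subset_iff)
  also have "\<dots> \<subseteq> find_lca t ` doubletons (\<Union>\<tau>')"
    using doubleton by blast
  finally have "card (lca t ` \<tau>') \<le> card (find_lca t ` doubletons (\<Union>\<tau>'))"
    using finite_doubletons[OF finite_subset[OF S_leaves finite_leaves]]
    by (intro card_mono) simp_all
  moreover have "card (lca t ` \<tau>') = card \<tau>'"
    using card_image inj_on_subset[OF assms(3) sub] by blast
  ultimately show "card (\<Union>\<tau>') \<ge> card \<tau>' + 1"
    using card_find_lca_doubletons_less[OF dist S_leaves S_ne] by simp
qed

lemma thin_subset: "thin \<tau> \<Longrightarrow> \<tau>' \<subseteq> \<tau> \<Longrightarrow> thin \<tau>'"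
  unfolding thin_def by blast

lemma thin_has_low_degree_element:
  assumes "finite X" "X \<noteq> {}" "\<tau> \<subseteq> doubletons X" "thin \<tau>"
  shows "\<exists>x\<in>X. card {s\<in>\<tau>. x \<in> s} \<le> 1"
proof (rule ccontr)
  assume no_low_degree: "\<not> ?thesis"
  then have degree: "2 \<le> card {s\<in>\<tau>. x \<in> s}" if "x \<in> \<Union>\<tau>" for x
    using that assms(3) by (force simp: doubletons_def)
  have fin: "finite \<tau>" "finite (\<Union>\<tau>)"
    using assms(1,3) finite_doubletons[of X] finite_subset[of "\<Union>\<tau>" X]
    by (auto intro: finite_subset simp: doubletons_def)
  have "2 * card (\<Union>\<tau>) = (\<Sum>x\<in>\<Union>\<tau>. 2)"
    by simp
  also have "\<dots> \<le> (\<Sum>x\<in>\<Union>\<tau>. card {s\<in>\<tau>. x \<in> s})"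
    using degree by (rule sum_mono)
  also have "\<dots> = 2 * card \<tau>"
  proof (rule sum_multicount[OF fin(2,1)], intro ballI)
    fix s assume "s \<in> \<tau>"
    then have "{x \<in> \<Union>\<tau>. x \<in> s} = s" "card s = 2"
      using assms(3) by (auto simp: doubletons_def)
    then show "card {x \<in> \<Union>\<tau>. x \<in> s} = 2" by simp
  qed
  finally have "card (\<Union>\<tau>) \<le> card \<tau>" by simp
  moreover have "\<tau> \<noteq> {}"
    using no_low_degree assms(2) by auto
  then have "card (\<Union>\<tau>) \<ge> card \<tau> + 1"
    using assms(4) unfolding thin_def by blast
  ultimately show False by simp
qed

lemma cherries_Leaf [simp]: "cherries (Leaf a) = {}"
  by (auto simp: cherries_def)

lemma caterpillar_Node_Leaf: "caterpillar t \<Longrightarrow> caterpillar (Node t (Leaf x))"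
proof (cases t)
  case (Leaf a)
  then have "cherries (Node t (Leaf x)) = {Node t (Leaf x)}"
    by (auto simp: cherries_def)
  then show ?thesis by (simp add: caterpillar_def)
next
  case (Node l r)
  then have "cherries (Node t (Leaf x)) = cherries t"
    by (auto simp: cherries_def)
  then show "caterpillar t \<Longrightarrow> ?thesis" by (simp add: caterpillar_def)
qed

lemma inj_on_find_lca_Node_Leaf:
  assumes "x \<notin> leaves t" "\<tau> \<subseteq> doubletons (insert x (leaves t))"
    and "card {s\<in>\<tau>. x \<in> s} \<le> 1" "inj_on (find_lca t) {s\<in>\<tau>. x \<notin> s}"
  shows "inj_on (find_lca (Node t (Leaf x))) \<tau>"
proof -
  let ?root = "Node t (Leaf x)"
  define avoiding where "avoiding = {s\<in>\<tau>. x \<notin> s}"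
  define containing where "containing = {s\<in>\<tau>. x \<in> s}"
  have find_lca_avoiding: "find_lca ?root s = find_lca t s" if "s \<in> avoiding" for s
    using that assms(2) by (auto simp: avoiding_def doubletons_def)
  have find_lca_containing: "find_lca ?root s = ?root" if "s \<in> containing" for s
  proof -
    have "\<not> s \<subseteq> {x}"
      using that assms(2) card_mono[of "{x}" s] by (auto simp: containing_def doubletons_def)
    then show ?thesis using that assms(1) by (auto simp: containing_def)
  qed
  have "finite \<tau>"
    using assms(2) finite_doubletons[of "insert x (leaves t)"] finite_subset by auto
  then have inj_containing: "inj_on (find_lca ?root) containing"
    using assms(3) by (auto simp: containing_def card_le_Suc0_iff_eq inj_on_def)
  have inj_avoiding: "inj_on (find_lca ?root) avoiding"
    using assms(4) find_lca_avoiding by (simp add: avoiding_def inj_on_def)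
  have "find_lca ?root ` avoiding \<subseteq> vertices t"
    using find_lca_avoiding find_lca_in_vertices[of t] by (auto simp del: find_lca.simps)
  moreover have "find_lca ?root ` containing \<subseteq> {?root}"
    using find_lca_containing by (auto simp del: find_lca.simps)
  moreover have "vertices t \<inter> {?root} = {}"
    using size_vertices[of ?root t] by auto
  ultimately have "find_lca ?root ` avoiding \<inter> find_lca ?root ` containing = {}"
    by blast
  moreover have "avoiding - containing = avoiding" "containing - avoiding = containing"
    "avoiding \<union> containing = \<tau>"
    by (auto simp: avoiding_def containing_def)
  ultimately show ?thesis
    using inj_avoiding inj_containing inj_on_Un[of "find_lca ?root" avoiding containing] by simp
qed

lemma thin_imp_caterpillar_inj_on_find_lca:
  assumes "finite X" "X \<noteq> {}" "\<tau> \<subseteq> doubletons X" "thin \<tau>"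
  shows "\<exists>t. phylo_tree X t \<and> caterpillar t \<and> inj_on (find_lca t) \<tau>"
  using assms
proof (induction "card X" arbitrary: X \<tau> rule: less_induct)
  case less
  obtain x where x: "x \<in> X" and degree: "card {s\<in>\<tau>. x \<in> s} \<le> 1"
    using thin_has_low_degree_element[OF less.prems] by blast
  show ?case
  proof (cases "X = {x}")
    case True
    then show ?thesis
      using less.prems(3)
      by (intro exI[of _ "Leaf x"]) (simp add: phylo_tree_def leaves_def caterpillar_def)
  next
    case False
    let ?X = "X - {x}" and ?\<tau> = "{s\<in>\<tau>. x \<notin> s}"
    have "card ?X < card X" "?X \<noteq> {}" "?\<tau> \<subseteq> doubletons ?X" "thin ?\<tau>"
      using x False less.prems(1,3,4) card_Diff1_less[of X x] thin_subset[of \<tau> ?\<tau>]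
      by (auto simp: doubletons_def)
    then obtain t where t: "phylo_tree ?X t" "caterpillar t" "inj_on (find_lca t) ?\<tau>"
      using less.hyps less.prems(1) by blast
    then have "phylo_tree X (Node t (Leaf x))"
      using x by (auto simp: phylo_tree_def leaves_def)
    moreover have "inj_on (find_lca (Node t (Leaf x))) \<tau>"
      using t x less.prems(3) degree
      by (intro inj_on_find_lca_Node_Leaf) (auto simp: phylo_tree_def insert_absorb)
    ultimately show ?thesis
      using caterpillar_Node_Leaf[OF t(2)] by blast
  qed
qed

theorem theorem4:
  fixes X :: "'a set" and \<tau> :: "'a set set"
  assumes "finite X" and "X \<noteq> {}"
    and "\<tau> \<subseteq> {s. s \<subseteq> X \<and> card s = 2}"
    and "\<Union>\<tau> = X"
  shows "(thin \<tau> \<longleftrightarrow>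
           (\<exists>T. phylo_tree X T \<and> lca T ` \<tau> \<subseteq> interior_vertices T \<and> inj_on (lca T) \<tau>))
       \<and> ((\<exists>T. phylo_tree X T \<and> lca T ` \<tau> \<subseteq> interior_vertices T \<and> inj_on (lca T) \<tau>) \<longleftrightarrow>
           (\<exists>T. phylo_tree X T \<and> caterpillar T \<and> lca T ` \<tau> \<subseteq> interior_vertices T
                \<and> inj_on (lca T) \<tau>))"
proof -
  have \<tau>: "\<tau> \<subseteq> doubletons X"
    using assms(3) by (simp add: doubletons_def)
  have "\<exists>T. phylo_tree X T \<and> caterpillar T \<and> lca T ` \<tau> \<subseteq> interior_vertices T
            \<and> inj_on (lca T) \<tau>" if thin: "thin \<tau>"
  proof -
    obtain T where T: "phylo_tree X T" "caterpillar T" "inj_on (find_lca T) \<tau>"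
      using thin_imp_caterpillar_inj_on_find_lca[OF assms(1,2) \<tau> thin] by blast
    have "inj_on (lca T) \<tau>"
      using T(3) \<tau> lca_doubleton_eq_find_lca[OF T(1)] by (metis inj_on_cong subsetD)
    moreover have "lca T ` \<tau> \<subseteq> interior_vertices T"
      using \<tau> lca_doubleton_in_interior_vertices[OF T(1)] by blast
    ultimately show ?thesis using T(1,2) by blast
  qed
  moreover have "thin \<tau>" if "phylo_tree X T" "inj_on (lca T) \<tau>" for T
    using thin_if_inj_on_lca[OF that(1) \<tau> that(2)] .
  ultimately show ?thesis by blast
qed

end
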